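(* Let $\mathbb{K}$ be an algebraically closed field of characteristic zero, $\mathcal{C}\subset\mathbb{K}^2$ an affine irreducible plane curve, $A=(a,b)\in\mathbb{K}^2$, $d\in\mathbb{K}\setminus\{0\}$, and assume that $\mathcal{C}_0\neq\emptyset$ and that $\mathcal{C}$ is not a circle centered at $A$. Then $\mathfrak{C}(\mathcal{C},A,d)$ is irreducible and special if and only if $\mathcal{C}$ is a line passing through $A$.
   Context: For $\mathcal{C}$ defined by an irreducible polynomial $f(y_1,y_2)$: $\mathfrak{B}(\mathcal{C},A,d)\subset\mathbb{K}^2\times\mathbb{K}^2\times\mathbb{K}$ is the set of $(\bar x,\bar y,w)$ with $f(y_1,y_2)=0$, $(x_1-y_1)^2+(x_2-y_2)^2=d^2$, $(y_2-b)(x_1-y_1)-(y_1-a)(x_2-y_2)=0$, $w((y_1-a)^2+(y_2-b)^2)=1$; $\pi_1,\pi_2$ are the projections $(\bar x,\bar y,w)\mapsto\bar x$, $\mapsto\bar y$; the conchoid $\mathfrak{C}(\mathcal{C},A,d)$ is the Zariski closure of $\pi_1(\mathfrak{B}(\mathcal{C},A,d))$. $\mathcal{C}_0=\{(p_1,p_2)\in\mathcal{C}:(p_1-a)^2+(p_2-b)^2\neq0\}$. An irreducible component $\mathcal{M}$ of $\mathfrak{C}(\mathcal{C},A,d)$ is simple if there is a non-empty Zariski dense $\Omega\subset\mathcal{M}$ with $\mathrm{Card}(\pi_2(\pi_1^{-1}(Q)))=1$ for all $Q\in\Omega$; otherwise special. A circle centered at $A$ of radius $r$ is $(y_1-a)^2+(y_2-b)^2=r^2$.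 *)

theory Defs
  imports "HOL-Computational_Algebra.Polynomial" "HOL-Computational_Algebra.Polynomial_Factorial"
begin

definition algebraically_closed :: "'a::field itself \<Rightarrow> bool" where
  "algebraically_closed _ \<longleftrightarrow> (\<forall>p :: 'a poly. degree p > 0 \<longrightarrow> (\<exists>x. poly p x = 0))"

text \<open>Bivariate polynomials in K[y1,y2] are represented as K[y1][y2] (type 'a poly poly):
  the outer variable is y2, the coefficients are polynomials in y1.\<close>
definition eval2 :: "'a::comm_semiring_1 poly poly \<Rightarrow> 'a \<times> 'a \<Rightarrow> 'a" where
  "eval2 f p = poly (poly f [:snd p:]) (fst p)"

definition zero_set :: "'a::comm_semiring_1 poly poly \<Rightarrow> ('a \<times> 'a) set" where
  "zero_set f = {p. eval2 f p = 0}"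

definition zariski_closed :: "('a::comm_semiring_1 \<times> 'a) set \<Rightarrow> bool" where
  "zariski_closed S \<longleftrightarrow> (\<exists>P. S = {p. \<forall>g\<in>P. eval2 g p = 0})"

definition zclosure :: "('a::comm_semiring_1 \<times> 'a) set \<Rightarrow> ('a \<times> 'a) set" where
  "zclosure S = \<Inter>{T. zariski_closed T \<and> S \<subseteq> T}"

definition zariski_irreducible :: "('a::comm_semiring_1 \<times> 'a) set \<Rightarrow> bool" where
  "zariski_irreducible M \<longleftrightarrow> zariski_closed M \<and> M \<noteq> {} \<and>
     (\<forall>T1 T2. zariski_closed T1 \<and> zariski_closed T2 \<and> M \<subseteq> T1 \<union> T2 \<longrightarrow> M \<subseteq> T1 \<or> M \<subseteq> T2)"

definition irreducible_component :: "('a::comm_semiring_1 \<times> 'a) set \<Rightarrow> ('a \<times> 'a) set \<Rightarrow> bool" where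
  "irreducible_component X M \<longleftrightarrow> zariski_irreducible M \<and> M \<subseteq> X \<and>
     (\<forall>N. zariski_irreducible N \<and> M \<subseteq> N \<and> N \<subseteq> X \<longrightarrow> N = M)"

definition conchoid_B :: "'a::field poly poly \<Rightarrow> 'a \<Rightarrow> 'a \<Rightarrow> 'a \<Rightarrow> (('a \<times> 'a) \<times> ('a \<times> 'a) \<times> 'a) set" where
  "conchoid_B f a b d = {((x1,x2),(y1,y2),w).
      eval2 f (y1,y2) = 0 \<and>
      (x1 - y1)^2 + (x2 - y2)^2 = d^2 \<and>
      (y2 - b) * (x1 - y1) - (y1 - a) * (x2 - y2) = 0 \<and>
      w * ((y1 - a)^2 + (y2 - b)^2) = 1}"

definition conchoid :: "'a::field poly poly \<Rightarrow> 'a \<Rightarrow> 'a \<Rightarrow> 'a \<Rightarrow> ('a \<times> 'a) set" where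
  "conchoid f a b d = zclosure ((\<lambda>(x,y,w). x) ` conchoid_B f a b d)"

definition conchoid_fiber :: "'a::field poly poly \<Rightarrow> 'a \<Rightarrow> 'a \<Rightarrow> 'a \<Rightarrow> 'a \<times> 'a \<Rightarrow> ('a \<times> 'a) set" where
  "conchoid_fiber f a b d Q = (\<lambda>(x,y,w). y) ` {z \<in> conchoid_B f a b d. fst z = Q}"

definition simple_component :: "'a::field poly poly \<Rightarrow> 'a \<Rightarrow> 'a \<Rightarrow> 'a \<Rightarrow> ('a \<times> 'a) set \<Rightarrow> bool" where
  "simple_component f a b d M \<longleftrightarrow> irreducible_component (conchoid f a b d) M \<and>
     (\<exists>\<Omega>. \<Omega> \<noteq> {} \<and> \<Omega> \<subseteq> M \<and> zclosure \<Omega> = M \<and>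
          (\<forall>Q\<in>\<Omega>. card (conchoid_fiber f a b d Q) = 1))"

definition special_component :: "'a::field poly poly \<Rightarrow> 'a \<Rightarrow> 'a \<Rightarrow> 'a \<Rightarrow> ('a \<times> 'a) set \<Rightarrow> bool" where
  "special_component f a b d M \<longleftrightarrow> irreducible_component (conchoid f a b d) M \<and>
     \<not> simple_component f a b d M"

definition is_line :: "('a::field \<times> 'a) set \<Rightarrow> bool" where
  "is_line C \<longleftrightarrow> (\<exists>\<alpha> \<beta> \<gamma>. (\<alpha>, \<beta>) \<noteq> (0, 0) \<and> C = {(y1, y2). \<alpha> * y1 + \<beta> * y2 + \<gamma> = 0})"

definition is_circle_centered :: "('a::field \<times> 'a) set \<Rightarrow> 'a \<times> 'a \<Rightarrow> bool" where
  "is_circle_centered C A \<longleftrightarrow> (\<exists>r. C = {(y1, y2). (y1 - fst A)^2 + (y2 - snd A)^2 = r^2})"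

end

theory Submission
  imports Defs
begin

text \<open>
  Write N(x) for the quadrance (x1 - a)^2 + (x2 - b)^2 and let \<tau> be a square root of N(x). A point
  x \<noteq> A of the conchoid can only come from the two curve points x \<plusminus> d (x - A) / \<tau>. After clearing
  denominators, f at these two points takes the form P(x) \<plusminus> \<tau> Q(x) with polynomials P, Q, so the
  conchoid points having two preimages lie in {A} \<union> V(P, Q). If the conchoid is irreducible and
  special, the points with a single preimage are not dense, hence the whole conchoid lies in
  {A} \<union> V(P, Q): both candidate preimages of every conchoid point lie on the curve. Starting from a
  curve point at parameter s on a line through A and passing alternately to the conchoid and back,
  the curve contains the points at parameters s + 2kd, infinitely many in characteristic 0; so it
  contains the whole line and, being irreducible, is that line. Conversely, the conchoid of a line
  through A is the line itself, and all its points but two come from two distinct points of the line.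
\<close>

lemma square_root_exists:
  assumes "algebraically_closed TYPE('a::field)"
  shows "\<exists>s::'a. s\<^sup>2 = c"
proof -
  have "degree [:-c, 0, 1:] > 0" by simp
  then obtain s where "poly [:-c, 0, 1:] s = 0"
    using assms unfolding algebraically_closed_def by blast
  then have "s\<^sup>2 = c" by (simp add: power2_eq_square algebra_simps)
  then show ?thesis by blast
qed

lemma progression_avoiding_zero:
  fixes s d :: "'a::field_char_0"
  assumes "s \<noteq> 0" "d \<noteq> 0"
  shows "(\<forall>k::nat. s + of_nat k * d \<noteq> 0) \<or> (\<forall>k::nat. - s + of_nat k * d \<noteq> 0)"
proof (rule ccontr)
  assume "\<not> ?thesis"
  then obtain k l :: nat where "s + of_nat k * d = 0" "- s + of_nat l * d = 0" by auto
  then have k: "of_nat k * d = - s" and l: "of_nat l * d = s" by (simp_all add: add_eq_0_iff)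
  then have "of_nat (k + l) * d = 0" by (simp add: distrib_right)
  with assms(2) have "k + l = 0" by (metis mult_eq_0_iff of_nat_eq_0_iff)
  with k assms(1) show False by simp
qed

lemma poly_eq_0_if_roots_along_progression:
  fixes h :: "'a::field_char_0 poly"
  assumes "d \<noteq> 0" "\<And>k::nat. poly h (s + of_nat k * d) = 0"
  shows "h = 0"
proof (rule ccontr)
  assume "h \<noteq> 0"
  then have "finite {t. poly h t = 0}" by (rule poly_roots_finite)
  moreover have "range (\<lambda>k::nat. s + of_nat k * d) \<subseteq> {t. poly h t = 0}" using assms(2) by auto
  ultimately have "finite (range (\<lambda>k::nat. s + of_nat k * d))" by (rule finite_subset[rotated])
  moreover have "inj (\<lambda>k::nat. s + of_nat k * d)" by (rule injI) (use assms(1) in simp)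
  ultimately show False by (simp add: finite_image_iff)
qed

lemma parallel_imp_multiple:
  fixes u1 u2 e1 e2 :: "'a::field"
  assumes "u1\<^sup>2 + u2\<^sup>2 \<noteq> 0" and "u2 * e1 - u1 * e2 = 0"
  shows "\<exists>k. e1 = k * u1 \<and> e2 = k * u2"
proof -
  define n where "n = u1\<^sup>2 + u2\<^sup>2"
  define k where "k = (e1 * u1 + e2 * u2) / n"
  have "e1 * n = (e1 * u1 + e2 * u2) * u1 + u2 * (u2 * e1 - u1 * e2)"
    and "e2 * n = (e1 * u1 + e2 * u2) * u2 - u1 * (u2 * e1 - u1 * e2)"
    by (simp_all add: n_def power2_eq_square algebra_simps)
  then have "e1 = k * u1 \<and> e2 = k * u2"
    using assms by (simp add: k_def n_def field_simps)
  then show ?thesis by blast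
qed

lemma eval2_0 [simp]: "eval2 0 x = 0"
  and eval2_1 [simp]: "eval2 1 x = 1"
  and eval2_add [simp]: "eval2 (p + q) x = eval2 p x + eval2 q x"
  and eval2_mult [simp]: "eval2 (p * q) x = eval2 p x * eval2 q x"
  by (simp_all add: eval2_def)

lemma eval2_diff [simp]: "eval2 (p - q) x = eval2 p x - eval2 (q :: 'a::comm_ring_1 poly poly) x"
  by (simp add: eval2_def)

lemma eval2_power [simp]: "eval2 (p ^ n) x = eval2 p x ^ n"
  by (induction n) simp_all

lemma eval2_pCons: "eval2 (pCons c g) x = poly c (fst x) + snd x * eval2 g x"
  by (simp add: eval2_def)

definition coord1 :: "'a::comm_semiring_1 poly poly" where "coord1 = [:[:0, 1:]:]"

definition coord2 :: "'a::comm_semiring_1 poly poly" where "coord2 = [:0, 1:]"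

definition const2 :: "'a::comm_semiring_1 \<Rightarrow> 'a poly poly" where "const2 c = [:[:c:]:]"

lemma eval2_coord1 [simp]: "eval2 coord1 x = fst x"
  and eval2_coord2 [simp]: "eval2 coord2 x = snd x"
  and eval2_const2 [simp]: "eval2 (const2 c) x = c"
  by (simp_all add: coord1_def coord2_def const2_def eval2_def)

lemma eval2_unit_nonzero:
  fixes u :: "'a::field poly poly"
  assumes "u dvd 1"
  shows "eval2 u p \<noteq> 0"
proof -
  from assms obtain u' where "1 = u * u'" by (auto elim: dvdE)
  then have "eval2 u p * eval2 u' p = 1" by (metis eval2_1 eval2_mult)
  then show ?thesis by auto
qed

lemma eval2_eq_poly_map_poly: "eval2 f (x1, x2) = poly (map_poly (\<lambda>c. poly c x1) f) x2"
proof (induction f rule: pCons_induct)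
  case (pCons c g)
  have "map_poly (\<lambda>c. poly c x1) (pCons c g) = pCons (poly c x1) (map_poly (\<lambda>c. poly c x1) g)"
    by (rule map_poly_pCons) simp
  then show ?case using pCons.IH by (simp add: eval2_pCons)
qed simp

section \<open>The Zariski topology of the plane\<close>

definition zero_locus :: "'a::comm_semiring_1 poly poly set \<Rightarrow> ('a \<times> 'a) set" where
  "zero_locus P = {p. \<forall>g\<in>P. eval2 g p = 0}"

lemma zariski_closed_iff_zero_locus: "zariski_closed S \<longleftrightarrow> (\<exists>P. S = zero_locus P)"
  by (simp add: zariski_closed_def zero_locus_def)

lemma zariski_closed_zero_locus [intro, simp]: "zariski_closed (zero_locus P)"
  by (auto simp: zariski_closed_iff_zero_locus)

lemma zero_locus_mult_Un:
  fixes P Q :: "'a::idom poly poly set"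
  shows "zero_locus P \<union> zero_locus Q = zero_locus {g * h | g h. g \<in> P \<and> h \<in> Q}"
  unfolding zero_locus_def by auto (metis eval2_mult mult_eq_0_iff)

lemma zariski_closed_Un [intro]:
  fixes S T :: "('a::idom \<times> 'a) set"
  assumes "zariski_closed S" "zariski_closed T"
  shows "zariski_closed (S \<union> T)"
  using assms by (auto simp: zariski_closed_iff_zero_locus zero_locus_mult_Un)

lemma zariski_closed_Inter:
  fixes F :: "('a::comm_semiring_1 \<times> 'a) set set"
  assumes "\<And>S. S \<in> F \<Longrightarrow> zariski_closed S"
  shows "zariski_closed (\<Inter>F)"
proof -
  obtain ideal where ideal: "\<And>S. S \<in> F \<Longrightarrow> S = zero_locus (ideal S)"
    using assms unfolding zariski_closed_iff_zero_locus by metis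
  have "\<Inter>F = zero_locus (\<Union>S\<in>F. ideal S)"
    using ideal unfolding zero_locus_def by blast
  then show ?thesis by simp
qed

lemma zariski_closed_empty [intro]: "zariski_closed ({} :: ('a::comm_semiring_1 \<times> 'a) set)"
proof -
  have "({} :: ('a \<times> 'a) set) = zero_locus {1}" by (simp add: zero_locus_def)
  then show ?thesis by (metis zariski_closed_zero_locus)
qed

lemma zariski_closed_singleton [intro]: "zariski_closed {(u :: 'a::comm_ring_1, v)}"
proof -
  have "{(u, v)} = zero_locus {coord1 - const2 u, coord2 - const2 v}"
    by (auto simp: zero_locus_def)
  then show ?thesis by simp
qed

lemma zariski_closed_insert [intro]:
  "zariski_closed S \<Longrightarrow> zariski_closed (insert (u :: 'a::idom, v) S)"
  by (metis insert_is_Un zariski_closed_Un zariski_closed_singleton)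

lemma zariski_closed_zero_set [intro]: "zariski_closed (zero_set f)"
proof -
  have "zero_set f = zero_locus {f}" by (simp add: zero_set_def zero_locus_def)
  then show ?thesis by simp
qed

lemma zariski_closed_zclosure [intro, simp]: "zariski_closed (zclosure S)"
  unfolding zclosure_def by (rule zariski_closed_Inter) simp

lemma zclosure_subset: "S \<subseteq> zclosure S"
  unfolding zclosure_def by auto

lemma zclosure_minimal: "zariski_closed T \<Longrightarrow> S \<subseteq> T \<Longrightarrow> zclosure S \<subseteq> T"
  unfolding zclosure_def by auto

lemma zclosure_closed: "zariski_closed T \<Longrightarrow> zclosure T = T"
  using zclosure_subset zclosure_minimal by blast

lemma zclosure_empty: "zclosure ({} :: ('a::comm_semiring_1 \<times> 'a) set) = {}"
  using zariski_closed_empty zclosure_closed by blast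

lemma zariski_irreducible_subset_Un:
  assumes "zariski_irreducible M" "zariski_closed T1" "zariski_closed T2"
    and "M \<subseteq> T1 \<union> T2" "\<not> M \<subseteq> T1"
  shows "M \<subseteq> T2"
  using assms unfolding zariski_irreducible_def by blast

definition line_point :: "'a::semiring_1 \<Rightarrow> 'a \<Rightarrow> 'a \<Rightarrow> 'a \<Rightarrow> 'a \<Rightarrow> 'a \<times> 'a" where
  "line_point a b v1 v2 t = (a + t * v1, b + t * v2)"

lemma eval2_line_point_poly:
  fixes f :: "'a::comm_ring_1 poly poly"
  shows "\<exists>h. \<forall>t. eval2 f (line_point a b v1 v2 t) = poly h t"
proof -
  define restrict where "restrict g = map_poly (\<lambda>c. pcompose c [:a, v1:]) g" for g :: "'a poly poly"
  have restrict_pCons: "restrict (pCons c g) = pCons (pcompose c [:a, v1:]) (restrict g)" for c g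
    unfolding restrict_def by (rule map_poly_pCons) simp
  have "eval2 f (line_point a b v1 v2 t) = poly (poly (restrict f) [:b, v2:]) t" for t
    by (induction f rule: pCons_induct)
      (simp_all add: restrict_def[of 0] restrict_pCons eval2_pCons line_point_def
        poly_pcompose algebra_simps)
  then show ?thesis by blast
qed

lemma line_point_if_parallel:
  fixes v1 v2 a b :: "'a::field"
  assumes "v1\<^sup>2 + v2\<^sup>2 \<noteq> 0" "v2 * (fst y - a) - v1 * (snd y - b) = 0"
  shows "\<exists>t. y = line_point a b v1 v2 t"
  using parallel_imp_multiple[OF assms] by (auto simp: line_point_def prod_eq_iff algebra_simps)

lemma inj_line_point:
  assumes "(v1, v2) \<noteq> (0, 0)"
  shows "inj (line_point a b v1 (v2 :: 'a::idom))"
proof (rule injI)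
  fix s t assume "line_point a b v1 v2 s = line_point a b v1 v2 t"
  then have "(s - t) * v1 = 0" "(s - t) * v2 = 0" by (auto simp: line_point_def algebra_simps)
  with assms show "s = t" by auto
qed

definition line_poly :: "'a::comm_semiring_1 \<Rightarrow> 'a \<Rightarrow> 'a \<Rightarrow> 'a poly poly" where
  "line_poly \<alpha> \<beta> \<gamma> = [:[:\<gamma>, \<alpha>:], [:\<beta>:]:]"

lemma eval2_line_poly [simp]: "eval2 (line_poly \<alpha> \<beta> \<gamma>) p = \<alpha> * fst p + \<beta> * snd p + \<gamma>"
  by (simp add: line_poly_def eval2_def algebra_simps)

lemma line_poly_dvd_if_vanishing_nonvertical:
  fixes f :: "'a::field_char_0 poly poly"
  assumes "\<beta> \<noteq> 0"
    and vanish: "\<And>y1 y2. \<alpha> * y1 + \<beta> * y2 + \<gamma> = 0 \<Longrightarrow> eval2 f (y1, y2) = 0"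
  shows "line_poly \<alpha> \<beta> \<gamma> dvd f"
proof -
  define l where "l = line_poly \<alpha> \<beta> \<gamma>"
  have l0: "l \<noteq> 0" and deg_l: "degree l = 1" and lead_l: "coeff l 1 = [:\<beta>:]"
    using assms(1) by (auto simp: l_def line_poly_def)
  obtain q r where qr: "pseudo_divmod f l = (q, r)" by fastforce
  define k where "k = Suc (degree f) - degree l"
  have div: "smult [:\<beta> ^ k:] f = l * q + r"
    using pseudo_divmod(1)[OF l0 qr] deg_l lead_l by (simp add: k_def poly_const_pow)
  have "r = 0 \<or> degree r < 1" using pseudo_divmod(2)[OF l0 qr] deg_l by simp
  then have "degree r = 0" by auto
  then have r_const: "r = [:coeff r 0:]" by (metis degree_eq_zeroE coeff_pCons_0)
  \<comment> \<open>the remainder lies in K[y1] and vanishes at every y1, since each y1 has a point of the line above it\<close>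
  have "poly (coeff r 0) y1 = 0" for y1
  proof -
    define y2 where "y2 = - (\<alpha> * y1 + \<gamma>) / \<beta>"
    have on_line: "\<alpha> * y1 + \<beta> * y2 + \<gamma> = 0" using assms(1) by (simp add: y2_def field_simps)
    have "\<beta> ^ k * eval2 f (y1, y2) = eval2 l (y1, y2) * eval2 q (y1, y2) + eval2 r (y1, y2)"
      using arg_cong[OF div, of "\<lambda>p. eval2 p (y1, y2)"] by (simp add: eval2_def)
    moreover have "eval2 r (y1, y2) = poly (coeff r 0) y1"
      by (subst r_const) (simp add: eval2_def)
    ultimately show ?thesis using vanish[OF on_line] on_line by (simp add: l_def)
  qed
  then have "coeff r 0 = 0" using poly_all_0_iff_0 by blast
  then have "r = 0" using r_const by simp
  then have "smult [:1 / \<beta> ^ k:] (smult [:\<beta> ^ k:] f) = l * smult [:1 / \<beta> ^ k:] q"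
    using div by simp
  then have "f = l * smult [:1 / \<beta> ^ k:] q"
    using assms(1) by (simp add: one_pCons[symmetric])
  then show ?thesis unfolding l_def by (metis dvd_triv_left)
qed

lemma line_poly_dvd_if_vanishing_vertical:
  fixes f :: "'a::field_char_0 poly poly"
  assumes "\<alpha> \<noteq> 0"
    and vanish: "\<And>y1 y2. \<alpha> * y1 + \<gamma> = 0 \<Longrightarrow> eval2 f (y1, y2) = 0"
  shows "line_poly \<alpha> 0 \<gamma> dvd f"
proof -
  define x1 where "x1 = - \<gamma> / \<alpha>"
  have "eval2 f (x1, y2) = 0" for y2
    by (rule vanish) (use assms(1) in \<open>simp add: x1_def\<close>)
  then have "map_poly (\<lambda>c. poly c x1) f = 0"
    using poly_all_0_iff_0 eval2_eq_poly_map_poly by metis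
  then have "poly (coeff f n) x1 = 0" for n
    by (metis coeff_0 coeff_map_poly poly_0)
  then have "[:-x1, 1:] dvd coeff f n" for n using poly_eq_0_iff_dvd by blast
  moreover have "[:\<gamma>, \<alpha>:] = smult \<alpha> [:-x1, 1:]" using assms(1) by (simp add: x1_def)
  ultimately have "[:\<gamma>, \<alpha>:] dvd coeff f n" for n using assms(1) by (metis smult_dvd)
  then have "[:[:\<gamma>, \<alpha>:]:] dvd f" by (simp add: const_poly_dvd_iff)
  then show ?thesis by (simp add: line_poly_def)
qed

lemma line_poly_dvd_if_vanishing:
  fixes f :: "'a::field_char_0 poly poly"
  assumes "(\<alpha>, \<beta>) \<noteq> (0, 0)"
    and "\<And>y1 y2. \<alpha> * y1 + \<beta> * y2 + \<gamma> = 0 \<Longrightarrow> eval2 f (y1, y2) = 0"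
  shows "line_poly \<alpha> \<beta> \<gamma> dvd f"
  using assms line_poly_dvd_if_vanishing_nonvertical[of \<beta> \<alpha> \<gamma> f]
    line_poly_dvd_if_vanishing_vertical[of \<alpha> \<gamma> f]
  by (cases "\<beta> = 0") auto

lemma zero_set_eq_line_if_vanishing:
  fixes f :: "'a::field_char_0 poly poly"
  assumes "irreducible f" and \<alpha>\<beta>: "(\<alpha>, \<beta>) \<noteq> (0, 0)"
    and "\<And>y1 y2. \<alpha> * y1 + \<beta> * y2 + \<gamma> = 0 \<Longrightarrow> eval2 f (y1, y2) = 0"
  shows "zero_set f = {(y1, y2). \<alpha> * y1 + \<beta> * y2 + \<gamma> = 0}"
proof -
  obtain q where f: "f = line_poly \<alpha> \<beta> \<gamma> * q"
    using line_poly_dvd_if_vanishing[OF \<alpha>\<beta> assms(3)] by (auto elim: dvdE)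
  have "\<exists>p. eval2 (line_poly \<alpha> \<beta> \<gamma>) p = 0"
  proof (cases "\<beta> = 0")
    case True
    then show ?thesis using \<alpha>\<beta> by (intro exI[of _ "(- \<gamma> / \<alpha>, 0)"]) simp
  next
    case False
    then show ?thesis by (intro exI[of _ "(0, - \<gamma> / \<beta>)"]) simp
  qed
  then have "\<not> line_poly \<alpha> \<beta> \<gamma> dvd 1" using eval2_unit_nonzero by blast
  then have "q dvd 1" using irreducibleD[OF assms(1) f] by blast
  then show ?thesis
    using eval2_unit_nonzero by (auto simp: zero_set_def f)
qed

lemma range_line_point:
  fixes v1 v2 a b :: "'a::field"
  assumes "v1\<^sup>2 + v2\<^sup>2 \<noteq> 0"
  shows "range (line_point a b v1 v2) = zero_locus {line_poly v2 (- v1) (v1 * b - v2 * a)}"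
  using line_point_if_parallel[OF assms]
  by (fastforce simp: zero_locus_def line_point_def algebra_simps)

lemma zariski_irreducible_range_line_point:
  fixes v1 v2 a b :: "'a::field_char_0"
  assumes "v1\<^sup>2 + v2\<^sup>2 \<noteq> 0"
  shows "zariski_irreducible (range (line_point a b v1 v2))"
  unfolding zariski_irreducible_def
proof (intro conjI allI impI)
  show "zariski_closed (range (line_point a b v1 v2))" by (simp add: range_line_point[OF assms])
  show "range (line_point a b v1 v2) \<noteq> {}" by simp
  fix T1 T2
  assume T: "zariski_closed T1 \<and> zariski_closed T2 \<and> range (line_point a b v1 v2) \<subseteq> T1 \<union> T2"
  then obtain P1 P2 where T1: "T1 = zero_locus P1" and T2: "T2 = zero_locus P2"
    by (auto simp: zariski_closed_iff_zero_locus)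
  show "range (line_point a b v1 v2) \<subseteq> T1 \<or> range (line_point a b v1 v2) \<subseteq> T2"
  proof (rule ccontr)
    assume "\<not> ?thesis"
    then obtain g1 g2 t1 t2 where g1: "g1 \<in> P1" "eval2 g1 (line_point a b v1 v2 t1) \<noteq> 0"
      and g2: "g2 \<in> P2" "eval2 g2 (line_point a b v1 v2 t2) \<noteq> 0"
      unfolding T1 T2 zero_locus_def by blast
    \<comment> \<open>restricted to the line, g1 and g2 become univariate polynomials whose product vanishes\<close>
    obtain h1 h2 where h1: "\<And>t. eval2 g1 (line_point a b v1 v2 t) = poly h1 t"
      and h2: "\<And>t. eval2 g2 (line_point a b v1 v2 t) = poly h2 t"
      using eval2_line_point_poly by metis
    have "poly (h1 * h2) t = 0" for t
      using T g1(1) g2(1) unfolding T1 T2 zero_locus_def by (force simp flip: h1 h2)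
    then have "h1 * h2 = 0" using poly_all_0_iff_0 by blast
    then have "h1 = 0 \<or> h2 = 0" by simp
    with g1(2) g2(2) show False by (auto simp: h1 h2)
  qed
qed

section \<open>The incidence variety of the conchoid\<close>

definition quadrance :: "'a::comm_ring_1 \<Rightarrow> 'a \<Rightarrow> 'a \<times> 'a \<Rightarrow> 'a" where
  "quadrance a b y = (fst y - a)\<^sup>2 + (snd y - b)\<^sup>2"

lemma quadrance_line_point: "quadrance a b (line_point a b v1 v2 t) = t\<^sup>2 * (v1\<^sup>2 + v2\<^sup>2)"
  by (simp add: quadrance_def line_point_def power_mult_distrib distrib_left)

lemma unit_direction:
  fixes s :: "'a::field"
  assumes "s\<^sup>2 = quadrance a b y" "s \<noteq> 0"
  shows "\<exists>v1 v2. v1\<^sup>2 + v2\<^sup>2 = 1 \<and> y = line_point a b v1 v2 s"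
proof (intro exI conjI)
  from assms have "quadrance a b y \<noteq> 0" by auto
  with assms show "((fst y - a) / s)\<^sup>2 + ((snd y - b) / s)\<^sup>2 = 1"
    by (simp add: quadrance_def power_divide add_divide_distrib [symmetric])
  show "y = line_point a b ((fst y - a) / s) ((snd y - b) / s) s"
    using assms(2) by (simp add: line_point_def)
qed

lemma conchoid_eq_zclosure: "conchoid f a b d = zclosure (fst ` conchoid_B f a b d)"
  by (simp add: conchoid_def case_prod_unfold)

lemma conchoid_B_D:
  assumes "(x, y, w) \<in> conchoid_B f a b d"
  shows "eval2 f y = 0" and "quadrance a b y \<noteq> 0"
    and "\<exists>k. fst x - a = (1 + k) * (fst y - a) \<and> snd x - b = (1 + k) * (snd y - b)
            \<and> k\<^sup>2 * quadrance a b y = d\<^sup>2"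
proof -
  obtain x1 x2 y1 y2 where xy: "x = (x1, x2)" "y = (y1, y2)" by (cases x, cases y)
  have dist: "(x1 - y1)\<^sup>2 + (x2 - y2)\<^sup>2 = d\<^sup>2"
    and par: "(y2 - b) * (x1 - y1) - (y1 - a) * (x2 - y2) = 0"
    and inv: "w * quadrance a b y = 1"
    and on_curve: "eval2 f y = 0"
    using assms by (simp_all add: conchoid_B_def xy quadrance_def)
  from on_curve show "eval2 f y = 0" .
  from inv show q: "quadrance a b y \<noteq> 0" by auto
  obtain k where k: "x1 - y1 = k * (y1 - a)" "x2 - y2 = k * (y2 - b)"
    using parallel_imp_multiple[OF _ par] q by (auto simp: xy quadrance_def)
  have "d\<^sup>2 = k\<^sup>2 * quadrance a b y"
    using dist unfolding k by (simp add: xy quadrance_def power_mult_distrib distrib_left)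
  with k show "\<exists>k. fst x - a = (1 + k) * (fst y - a) \<and> snd x - b = (1 + k) * (snd y - b)
      \<and> k\<^sup>2 * quadrance a b y = d\<^sup>2"
    by (intro exI[of _ k]) (simp add: xy algebra_simps)
qed

lemma conchoid_B_I:
  fixes t e v1 v2 :: "'a::field"
  assumes "t \<noteq> 0" "v1\<^sup>2 + v2\<^sup>2 = 1" "eval2 f (line_point a b v1 v2 t) = 0" "e\<^sup>2 = d\<^sup>2"
  shows "(line_point a b v1 v2 (t + e), line_point a b v1 v2 t, 1 / t\<^sup>2) \<in> conchoid_B f a b d"
proof -
  have unit: "c\<^sup>2 * v1\<^sup>2 + c\<^sup>2 * v2\<^sup>2 = c\<^sup>2" for c
    using assms(2) by (simp flip: distrib_left)
  show ?thesis
    using assms unfolding conchoid_B_def line_point_def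
    by (simp add: power_mult_distrib unit algebra_simps)
qed

text \<open>For a square root \<tau> of the quadrance of x, the points of the curve that x can come from
  are base_point x \<tau> and base_point x (-\<tau>), i.e. x \<plusminus> d (x - A) / \<tau>.\<close>
definition base_point :: "'a::field \<Rightarrow> 'a \<Rightarrow> 'a \<Rightarrow> 'a \<times> 'a \<Rightarrow> 'a \<Rightarrow> 'a \<times> 'a" where
  "base_point a b d x \<tau> = (a + (fst x - a) * (1 + d / \<tau>), b + (snd x - b) * (1 + d / \<tau>))"

lemma base_point_eqI:
  assumes "fst x - a = c * (fst y - a)" "snd x - b = c * (snd y - b)" "c * (1 + d / \<tau>) = 1"
  shows "base_point a b d x \<tau> = y"
proof -
  have "(fst x - a) * (1 + d / \<tau>) = fst y - a" "(snd x - b) * (1 + d / \<tau>) = snd y - b"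
    using assms by (metis mult.assoc mult.commute mult_1)+
  then show ?thesis by (simp add: base_point_def prod_eq_iff)
qed

lemma base_point_line_point:
  assumes "s \<noteq> 0"
  shows "base_point a b d (line_point a b v1 v2 s) s = line_point a b v1 v2 (s + d)"
  using assms by (simp add: base_point_def line_point_def field_simps)

lemma conchoid_B_base_point:
  assumes B: "(x, y, w) \<in> conchoid_B f a b d" and \<tau>: "\<tau> \<noteq> 0" "\<tau>\<^sup>2 = quadrance a b x"
  shows "y = base_point a b d x \<tau> \<or> y = base_point a b d x (-\<tau>)"
proof -
  obtain k where k: "fst x - a = (1 + k) * (fst y - a)" "snd x - b = (1 + k) * (snd y - b)"
      "k\<^sup>2 * quadrance a b y = d\<^sup>2"
    using conchoid_B_D(3)[OF B] by blast
  have "\<tau>\<^sup>2 = (1 + k)\<^sup>2 * quadrance a b y"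
    using \<tau>(2) k(1,2) by (simp add: quadrance_def power_mult_distrib distrib_left)
  then have "(k * \<tau>)\<^sup>2 = (1 + k)\<^sup>2 * (k\<^sup>2 * quadrance a b y)"
    by (simp add: power_mult_distrib mult_ac)
  also have "\<dots> = (d * (1 + k))\<^sup>2"
    using k(3) by (simp add: power_mult_distrib mult_ac)
  finally have "k * \<tau> = - (d * (1 + k)) \<or> k * \<tau> = d * (1 + k)"
    by (metis power2_eq_iff)
  then show ?thesis
  proof
    assume "k * \<tau> = - (d * (1 + k))"
    then have "(1 + k) * (1 + d / \<tau>) = 1" using \<tau>(1) by (simp add: field_simps)
    then show ?thesis using base_point_eqI[OF k(1,2)] by auto
  next
    assume "k * \<tau> = d * (1 + k)"
    then have "(1 + k) * (1 + d / - \<tau>) = 1" using \<tau>(1) by (simp add: field_simps)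
    then show ?thesis using base_point_eqI[OF k(1,2)] by auto
  qed
qed

lemma conchoid_B_quadrance_nonzero:
  assumes B: "(x, y, w) \<in> conchoid_B f a b d" and "x \<noteq> (a, b)"
  shows "quadrance a b x \<noteq> 0"
proof -
  obtain k where k: "fst x - a = (1 + k) * (fst y - a)" "snd x - b = (1 + k) * (snd y - b)"
    using conchoid_B_D(3)[OF B] by blast
  with assms(2) have "1 + k \<noteq> 0" by (auto simp: prod_eq_iff)
  moreover have "quadrance a b x = (1 + k)\<^sup>2 * quadrance a b y"
    using k by (simp add: quadrance_def power_mult_distrib distrib_left)
  ultimately show ?thesis using conchoid_B_D(2)[OF B] by simp
qed

lemma mem_conchoid_fiberI: "(x, y, w) \<in> conchoid_B f a b d \<Longrightarrow> y \<in> conchoid_fiber f a b d x"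
  unfolding conchoid_fiber_def by (rule image_eqI[of _ _ "(x, y, w)"]) auto

lemma mem_conchoid_fiberD: "y \<in> conchoid_fiber f a b d x \<Longrightarrow> \<exists>w. (x, y, w) \<in> conchoid_B f a b d"
  unfolding conchoid_fiber_def by auto

lemma conchoid_fiber_subset_base_points:
  assumes "\<tau> \<noteq> 0" "\<tau>\<^sup>2 = quadrance a b x"
  shows "conchoid_fiber f a b d x \<subseteq> {base_point a b d x \<tau>, base_point a b d x (-\<tau>)}"
  using conchoid_B_base_point[OF _ assms] mem_conchoid_fiberD by blast

lemma card_conchoid_fiber_ne_1:
  assumes B: "(x, y, w) \<in> conchoid_B f a b d" and \<tau>: "\<tau> \<noteq> 0" "\<tau>\<^sup>2 = quadrance a b x"
    and card: "card (conchoid_fiber f a b d x) \<noteq> 1"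
  shows "eval2 f (base_point a b d x \<tau>) = 0" "eval2 f (base_point a b d x (-\<tau>)) = 0"
proof -
  let ?F = "conchoid_fiber f a b d x"
  have "base_point a b d x \<tau> \<in> ?F \<and> base_point a b d x (-\<tau>) \<in> ?F"
  proof (rule ccontr)
    assume "\<not> ?thesis"
    then have "?F = {y}"
      using conchoid_fiber_subset_base_points[OF \<tau>] mem_conchoid_fiberI[OF B] by blast
    with card show False by simp
  qed
  then show "eval2 f (base_point a b d x \<tau>) = 0" "eval2 f (base_point a b d x (-\<tau>)) = 0"
    using mem_conchoid_fiberD conchoid_B_D(1) by blast+
qed

section \<open>Regular functions on the double cover\<close>

text \<open>F is regular on the double cover \<tau>^2 = n(x) of the plane (away from \<tau> = 0): there it agrees
  with P(x) + \<tau> Q(x) for polynomials P, Q.\<close>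
definition regular_on_double_cover :: "'a::comm_ring_1 poly poly \<Rightarrow> ('a \<times> 'a \<Rightarrow> 'a \<Rightarrow> 'a) \<Rightarrow> bool" where
  "regular_on_double_cover n F \<longleftrightarrow>
     (\<exists>P Q. \<forall>x \<tau>. \<tau> \<noteq> 0 \<longrightarrow> \<tau>\<^sup>2 = eval2 n x \<longrightarrow> F x \<tau> = eval2 P x + \<tau> * eval2 Q x)"

lemma regular_on_double_cover_cong:
  "regular_on_double_cover n F \<Longrightarrow> (\<And>x \<tau>. \<tau> \<noteq> 0 \<Longrightarrow> F x \<tau> = G x \<tau>) \<Longrightarrow> regular_on_double_cover n G"
  unfolding regular_on_double_cover_def by metis

lemma regular_on_double_cover_eval2: "regular_on_double_cover n (\<lambda>x \<tau>. eval2 p x)"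
  unfolding regular_on_double_cover_def by (intro exI[of _ p] exI[of _ 0]) simp

lemma regular_on_double_cover_root: "regular_on_double_cover n (\<lambda>x \<tau>. \<tau>)"
  unfolding regular_on_double_cover_def by (intro exI[of _ 0] exI[of _ 1]) simp

lemma regular_on_double_cover_add:
  assumes "regular_on_double_cover n F" "regular_on_double_cover n G"
  shows "regular_on_double_cover n (\<lambda>x \<tau>. F x \<tau> + G x \<tau>)"
proof -
  obtain P1 Q1 P2 Q2 where
    F: "\<And>x \<tau>. \<tau> \<noteq> 0 \<Longrightarrow> \<tau>\<^sup>2 = eval2 n x \<Longrightarrow> F x \<tau> = eval2 P1 x + \<tau> * eval2 Q1 x" and
    G: "\<And>x \<tau>. \<tau> \<noteq> 0 \<Longrightarrow> \<tau>\<^sup>2 = eval2 n x \<Longrightarrow> G x \<tau> = eval2 P2 x + \<tau> * eval2 Q2 x"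
    using assms unfolding regular_on_double_cover_def by metis
  show ?thesis
    unfolding regular_on_double_cover_def
    by (intro exI[of _ "P1 + P2"] exI[of _ "Q1 + Q2"]) (simp add: F G algebra_simps)
qed

lemma regular_on_double_cover_mult:
  assumes "regular_on_double_cover n F" "regular_on_double_cover n G"
  shows "regular_on_double_cover n (\<lambda>x \<tau>. F x \<tau> * G x \<tau>)"
proof -
  obtain P1 Q1 P2 Q2 where
    F: "\<And>x \<tau>. \<tau> \<noteq> 0 \<Longrightarrow> \<tau>\<^sup>2 = eval2 n x \<Longrightarrow> F x \<tau> = eval2 P1 x + \<tau> * eval2 Q1 x" and
    G: "\<And>x \<tau>. \<tau> \<noteq> 0 \<Longrightarrow> \<tau>\<^sup>2 = eval2 n x \<Longrightarrow> G x \<tau> = eval2 P2 x + \<tau> * eval2 Q2 x"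
    using assms unfolding regular_on_double_cover_def by metis
  have "F x \<tau> * G x \<tau> = eval2 (P1 * P2 + n * Q1 * Q2) x + \<tau> * eval2 (P1 * Q2 + Q1 * P2) x"
    if "\<tau> \<noteq> 0" "\<tau>\<^sup>2 = eval2 n x" for x \<tau>
    unfolding F[OF that] G[OF that] by (simp add: that(2) [symmetric] power2_eq_square algebra_simps)
  then show ?thesis
    unfolding regular_on_double_cover_def by blast
qed

lemma regular_on_double_cover_root_power_mult:
  "regular_on_double_cover n F \<Longrightarrow> regular_on_double_cover n (\<lambda>x \<tau>. \<tau> ^ k * F x \<tau>)"
proof (induction k)
  case (Suc k)
  then show ?case
    using regular_on_double_cover_mult[OF regular_on_double_cover_root Suc.IH[OF Suc.prems]]
    by (simp add: mult.assoc)
qed simp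

lemma regular_on_double_cover_clear_denominators:
  assumes u1: "regular_on_double_cover n (\<lambda>x \<tau>. \<tau> * u1 x \<tau>)"
    and u2: "regular_on_double_cover n (\<lambda>x \<tau>. \<tau> * u2 x \<tau>)"
  shows "\<exists>m. regular_on_double_cover n (\<lambda>x \<tau>. \<tau> ^ m * eval2 g (u1 x \<tau>, u2 x \<tau>))"
proof -
  have coeff: "\<exists>m. regular_on_double_cover n (\<lambda>x \<tau>. \<tau> ^ m * poly c (u1 x \<tau>))" for c
  proof (induction c rule: pCons_induct)
    case (pCons c0 c)
    then obtain m where m: "regular_on_double_cover n (\<lambda>x \<tau>. \<tau> ^ m * poly c (u1 x \<tau>))" by blast
    have "regular_on_double_cover n (\<lambda>x \<tau>. \<tau> ^ Suc m * eval2 (const2 c0) x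
        + (\<tau> * u1 x \<tau>) * (\<tau> ^ m * poly c (u1 x \<tau>)))"
      by (intro regular_on_double_cover_add regular_on_double_cover_mult
          regular_on_double_cover_root_power_mult regular_on_double_cover_eval2 u1 m)
    then have "regular_on_double_cover n (\<lambda>x \<tau>. \<tau> ^ Suc m * poly (pCons c0 c) (u1 x \<tau>))"
      by (rule regular_on_double_cover_cong) (simp add: algebra_simps)
    then show ?case by blast
  qed (auto intro: regular_on_double_cover_cong[OF regular_on_double_cover_eval2[of n 0]])
  show ?thesis
  proof (induction g rule: pCons_induct)
    case (pCons c g)
    then obtain m where m: "regular_on_double_cover n (\<lambda>x \<tau>. \<tau> ^ m * eval2 g (u1 x \<tau>, u2 x \<tau>))"
      by blast
    obtain k where k: "regular_on_double_cover n (\<lambda>x \<tau>. \<tau> ^ k * poly c (u1 x \<tau>))"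
      using coeff by blast
    have "regular_on_double_cover n (\<lambda>x \<tau>. \<tau> ^ Suc m * (\<tau> ^ k * poly c (u1 x \<tau>))
        + \<tau> ^ k * ((\<tau> * u2 x \<tau>) * (\<tau> ^ m * eval2 g (u1 x \<tau>, u2 x \<tau>))))"
      by (intro regular_on_double_cover_add regular_on_double_cover_mult
          regular_on_double_cover_root_power_mult u2 k m)
    then have "regular_on_double_cover n
        (\<lambda>x \<tau>. \<tau> ^ (Suc m + k) * eval2 (pCons c g) (u1 x \<tau>, u2 x \<tau>))"
      by (rule regular_on_double_cover_cong) (simp add: eval2_pCons algebra_simps power_add)
    then show ?case by blast
  qed (auto intro: regular_on_double_cover_cong[OF regular_on_double_cover_eval2[of n 0]])
qed

definition quadrance_poly :: "'a::comm_ring_1 \<Rightarrow> 'a \<Rightarrow> 'a poly poly" where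
  "quadrance_poly a b = (coord1 - const2 a)\<^sup>2 + (coord2 - const2 b)\<^sup>2"

lemma eval2_quadrance_poly [simp]: "eval2 (quadrance_poly a b) x = quadrance a b x"
  by (simp add: quadrance_poly_def quadrance_def)

lemma regular_on_double_cover_base_point:
  "\<exists>m. regular_on_double_cover (quadrance_poly a b) (\<lambda>x \<tau>. \<tau> ^ m * eval2 g (base_point a b d x \<tau>))"
proof -
  have "regular_on_double_cover (quadrance_poly a b)
      (\<lambda>x \<tau>. \<tau> * eval2 (const2 c) x + eval2 (coord - const2 c) x * (\<tau> + eval2 (const2 d) x))"
    for c coord
    by (intro regular_on_double_cover_add regular_on_double_cover_mult
        regular_on_double_cover_root regular_on_double_cover_eval2)
  note affine = this
  have "regular_on_double_cover (quadrance_poly a b) (\<lambda>x \<tau>. \<tau> * fst (base_point a b d x \<tau>))"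
    using affine[of a coord1] by (rule regular_on_double_cover_cong) (simp add: base_point_def field_simps)
  moreover have "regular_on_double_cover (quadrance_poly a b) (\<lambda>x \<tau>. \<tau> * snd (base_point a b d x \<tau>))"
    using affine[of b coord2] by (rule regular_on_double_cover_cong) (simp add: base_point_def field_simps)
  ultimately have "\<exists>m. regular_on_double_cover (quadrance_poly a b)
      (\<lambda>x \<tau>. \<tau> ^ m * eval2 g (fst (base_point a b d x \<tau>), snd (base_point a b d x \<tau>)))"
    by (rule regular_on_double_cover_clear_denominators)
  then show ?thesis by simp
qed

section \<open>Irreducible special conchoids\<close>

lemma special_conchoid_not_subset_simple_locus:
  assumes "special_component f a b d (conchoid f a b d)"
  shows "\<not> conchoid f a b d \<subseteq> zclosure {x \<in> fst ` conchoid_B f a b d. card (conchoid_fiber f a b d x) = 1}"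
    (is "\<not> ?M \<subseteq> zclosure ?S")
proof
  assume sub: "?M \<subseteq> zclosure ?S"
  have component: "irreducible_component ?M ?M" and not_simple: "\<not> simple_component f a b d ?M"
    using assms by (simp_all add: special_component_def)
  have "?M \<noteq> {}"
    using component by (simp add: irreducible_component_def zariski_irreducible_def)
  have "?S \<subseteq> ?M" unfolding conchoid_eq_zclosure using zclosure_subset by blast
  then have "zclosure ?S \<subseteq> ?M"
    by (rule zclosure_minimal[rotated]) (simp add: conchoid_eq_zclosure)
  with sub have closure: "zclosure ?S = ?M" by (rule subset_antisym[rotated])
  have "?S \<noteq> {}"
  proof
    assume "?S = {}"
    with closure have "?M = zclosure {}" by (simp only:)
    with \<open>?M \<noteq> {}\<close> show False by (simp add: zclosure_empty)
  qed
  with component \<open>?S \<subseteq> ?M\<close> closure have "simple_component f a b d ?M"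
    unfolding simple_component_def by (intro conjI exI[of _ ?S]) auto
  with not_simple show False by contradiction
qed

lemma conchoid_double_fiber_in_zero_locus:
  fixes f :: "'a::field_char_0 poly poly"
  assumes alg: "algebraically_closed TYPE('a)"
    and PQ: "\<And>x \<tau>. \<tau> \<noteq> 0 \<Longrightarrow> \<tau>\<^sup>2 = quadrance a b x \<Longrightarrow>
        \<tau> ^ m * eval2 f (base_point a b d x \<tau>) = eval2 P x + \<tau> * eval2 Q x"
    and B: "(x, y, w) \<in> conchoid_B f a b d" and "x \<noteq> (a, b)"
    and card: "card (conchoid_fiber f a b d x) \<noteq> 1"
  shows "x \<in> zero_locus {P, Q}"
proof -
  have "quadrance a b x \<noteq> 0" using conchoid_B_quadrance_nonzero[OF B \<open>x \<noteq> (a, b)\<close>] .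
  moreover obtain \<tau> where \<tau>2: "\<tau>\<^sup>2 = quadrance a b x" using square_root_exists[OF alg] by blast
  ultimately have \<tau>: "\<tau> \<noteq> 0" "\<tau>\<^sup>2 = quadrance a b x" by auto
  have plus: "eval2 P x + \<tau> * eval2 Q x = 0" and minus: "eval2 P x - \<tau> * eval2 Q x = 0"
    using PQ[OF \<tau>] PQ[of "-\<tau>" x] \<tau> card_conchoid_fiber_ne_1[OF B \<tau> card] by auto
  have "2 * eval2 P x = (eval2 P x + \<tau> * eval2 Q x) + (eval2 P x - \<tau> * eval2 Q x)"
    by simp
  then have "eval2 P x = 0" unfolding plus minus by simp
  moreover from this plus \<tau>(1) have "eval2 Q x = 0" by simp
  ultimately show ?thesis by (simp add: zero_locus_def)
qed

lemma special_conchoid_base_point_on_curve: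
  fixes f :: "'a::field_char_0 poly poly"
  assumes alg: "algebraically_closed TYPE('a)"
    and irr: "zariski_irreducible (conchoid f a b d)"
    and special: "special_component f a b d (conchoid f a b d)"
    and B: "(x, y, w) \<in> conchoid_B f a b d" and "x \<noteq> (a, b)" and \<tau>: "\<tau> \<noteq> 0" "\<tau>\<^sup>2 = quadrance a b x"
  shows "eval2 f (base_point a b d x \<tau>) = 0"
proof -
  obtain m P Q where PQ: "\<And>x \<tau>. \<tau> \<noteq> 0 \<Longrightarrow> \<tau>\<^sup>2 = quadrance a b x \<Longrightarrow>
      \<tau> ^ m * eval2 f (base_point a b d x \<tau>) = eval2 P x + \<tau> * eval2 Q x"
    using regular_on_double_cover_base_point[of a b f d]
    unfolding regular_on_double_cover_def eval2_quadrance_poly by blast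
  define S where "S = {x \<in> fst ` conchoid_B f a b d. card (conchoid_fiber f a b d x) = 1}"
  define Z where "Z = {(a, b)} \<union> zero_locus {P, Q}"
  have Z_closed: "zariski_closed Z" unfolding Z_def by blast
  have "fst ` conchoid_B f a b d \<subseteq> zclosure S \<union> Z"
  proof
    fix x assume x: "x \<in> fst ` conchoid_B f a b d"
    then obtain y w where B: "(x, y, w) \<in> conchoid_B f a b d" by force
    show "x \<in> zclosure S \<union> Z"
    proof (cases "card (conchoid_fiber f a b d x) = 1 \<or> x = (a, b)")
      case True
      then show ?thesis using x zclosure_subset[of S] by (auto simp: S_def Z_def)
    next
      case False
      then show ?thesis using conchoid_double_fiber_in_zero_locus[OF alg PQ B] by (simp add: Z_def)
    qed
  qed
  then have "conchoid f a b d \<subseteq> zclosure S \<union> Z"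
    unfolding conchoid_eq_zclosure by (rule zclosure_minimal[rotated]) (use Z_closed in blast)
  moreover have "\<not> conchoid f a b d \<subseteq> zclosure S"
    unfolding S_def by (rule special_conchoid_not_subset_simple_locus[OF special])
  ultimately have "conchoid f a b d \<subseteq> Z"
    by (intro zariski_irreducible_subset_Un[OF irr zariski_closed_zclosure Z_closed])
  moreover have "x \<in> conchoid f a b d"
    using B zclosure_subset unfolding conchoid_eq_zclosure by force
  ultimately have "eval2 P x = 0" "eval2 Q x = 0"
    using \<open>x \<noteq> (a, b)\<close> by (auto simp: Z_def zero_locus_def)
  then show ?thesis using PQ[OF \<tau>] \<tau>(1) by simp
qed

text \<open>The curve point at parameter t yields the conchoid point at parameter t + d, one of whose base
  points is the point at parameter t + 2d.\<close>
lemma conchoid_step_along_line: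
  assumes base: "\<And>x y w \<tau>. (x, y, w) \<in> conchoid_B f a b d \<Longrightarrow> x \<noteq> (a, b) \<Longrightarrow> \<tau> \<noteq> 0 \<Longrightarrow>
      \<tau>\<^sup>2 = quadrance a b x \<Longrightarrow> eval2 f (base_point a b d x \<tau>) = 0"
    and v: "v1\<^sup>2 + v2\<^sup>2 = 1" and t: "t \<noteq> 0" "t + d \<noteq> 0"
    and on_curve: "eval2 f (line_point a b v1 v2 t) = 0"
  shows "eval2 f (line_point a b v1 v2 (t + 2 * d)) = 0"
proof -
  have B: "(line_point a b v1 v2 (t + d), line_point a b v1 v2 t, 1 / t\<^sup>2) \<in> conchoid_B f a b d"
    by (rule conchoid_B_I[OF t(1) v on_curve]) simp
  have quadrance: "quadrance a b (line_point a b v1 v2 (t + d)) = (t + d)\<^sup>2"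
    using v by (simp add: quadrance_line_point)
  then have "line_point a b v1 v2 (t + d) \<noteq> (a, b)"
    using t(2) by (auto simp: quadrance_def)
  from base[OF B this t(2) quadrance[symmetric]] show ?thesis
    by (simp add: base_point_line_point[OF t(2)] add.assoc flip: mult_2)
qed

lemma curve_contains_line_through_center:
  fixes f :: "'a::field_char_0 poly poly"
  assumes alg: "algebraically_closed TYPE('a)" and "d \<noteq> 0"
    and y0: "y0 \<in> zero_set f" "quadrance a b y0 \<noteq> 0"
    and base: "\<And>x y w \<tau>. (x, y, w) \<in> conchoid_B f a b d \<Longrightarrow> x \<noteq> (a, b) \<Longrightarrow> \<tau> \<noteq> 0 \<Longrightarrow>
      \<tau>\<^sup>2 = quadrance a b x \<Longrightarrow> eval2 f (base_point a b d x \<tau>) = 0"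
  shows "\<exists>v1 v2. v1\<^sup>2 + v2\<^sup>2 = 1 \<and> (\<forall>t. eval2 f (line_point a b v1 v2 t) = 0)"
proof -
  obtain s1 where s1: "s1\<^sup>2 = quadrance a b y0" using square_root_exists[OF alg] by blast
  with y0(2) have "s1 \<noteq> 0" by auto
  \<comment> \<open>a square root s of the quadrance of y0 such that the chain s, s + d, s + 2d, ... avoids A\<close>
  obtain s where s: "s\<^sup>2 = quadrance a b y0" "\<And>k::nat. s + of_nat k * d \<noteq> 0"
  proof (cases "\<forall>k::nat. s1 + of_nat k * d \<noteq> 0")
    case True
    then show ?thesis using that[of s1] s1 by blast
  next
    case False
    then show ?thesis
      using that[of "- s1"] s1 progression_avoiding_zero[OF \<open>s1 \<noteq> 0\<close> \<open>d \<noteq> 0\<close>] by auto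
  qed
  from s(2)[of 0] have "s \<noteq> 0" by simp
  obtain v1 v2 where v: "v1\<^sup>2 + v2\<^sup>2 = 1" and "y0 = line_point a b v1 v2 s"
    using unit_direction[OF s(1) \<open>s \<noteq> 0\<close>] by blast
  then have "eval2 f (line_point a b v1 v2 (s + of_nat k * (2 * d))) = 0" for k
  proof (induction k)
    case 0
    then show ?case using y0(1) by (simp add: zero_set_def)
  next
    case (Suc k)
    have "s + of_nat k * (2 * d) \<noteq> 0" "s + of_nat k * (2 * d) + d \<noteq> 0"
      using s(2)[of "2 * k"] s(2)[of "2 * k + 1"] by (simp_all add: algebra_simps)
    from conchoid_step_along_line[OF base v this Suc.IH[OF Suc.prems]]
    have "eval2 f (line_point a b v1 v2 (s + of_nat k * (2 * d) + 2 * d)) = 0" .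
    moreover have "s + of_nat (Suc k) * (2 * d) = s + of_nat k * (2 * d) + 2 * d"
      by (simp add: algebra_simps)
    ultimately show ?case by (simp only:)
  qed
  moreover obtain h where h: "\<And>t. eval2 f (line_point a b v1 v2 t) = poly h t"
    using eval2_line_point_poly by blast
  ultimately have "h = 0"
    using \<open>d \<noteq> 0\<close> by (intro poly_eq_0_if_roots_along_progression[of "2 * d" h s]) simp_all
  with v h show ?thesis by auto
qed

lemma special_conchoid_is_line_through_center:
  fixes f :: "'a::field_char_0 poly poly"
  assumes alg: "algebraically_closed TYPE('a)" and irr: "irreducible f" and "d \<noteq> 0"
    and y0: "y0 \<in> zero_set f" "quadrance a b y0 \<noteq> 0"
    and "zariski_irreducible (conchoid f a b d)" "special_component f a b d (conchoid f a b d)"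
  shows "is_line (zero_set f) \<and> (a, b) \<in> zero_set f"
proof -
  have "eval2 f (base_point a b d x \<tau>) = 0"
    if "(x, y, w) \<in> conchoid_B f a b d" "x \<noteq> (a, b)" "\<tau> \<noteq> 0" "\<tau>\<^sup>2 = quadrance a b x" for x y w \<tau>
    using special_conchoid_base_point_on_curve[OF alg assms(6,7) that] .
  then obtain v1 v2 where v: "v1\<^sup>2 + v2\<^sup>2 = 1" and on_line: "\<And>t. eval2 f (line_point a b v1 v2 t) = 0"
    using curve_contains_line_through_center[OF alg \<open>d \<noteq> 0\<close> y0] by blast
  have "(v2, - v1) \<noteq> (0, 0)" using v by auto
  moreover have "zero_set f = {(y1, y2). v2 * y1 + - v1 * y2 + (v1 * b - v2 * a) = 0}"
  proof (rule zero_set_eq_line_if_vanishing[OF irr \<open>(v2, - v1) \<noteq> (0, 0)\<close>])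
    fix y1 y2 assume "v2 * y1 + - v1 * y2 + (v1 * b - v2 * a) = 0"
    then obtain t where "(y1, y2) = line_point a b v1 v2 t"
      using line_point_if_parallel[of v1 v2 "(y1, y2)" a b] v by (auto simp: algebra_simps)
    then show "eval2 f (y1, y2) = 0" by (simp add: on_line)
  qed
  ultimately have "is_line (zero_set f)" unfolding is_line_def by blast
  moreover have "(a, b) \<in> zero_set f" using on_line[of 0] by (simp add: zero_set_def line_point_def)
  ultimately show ?thesis ..
qed

section \<open>Conchoids of lines through the centre\<close>

lemma line_point_mem_conchoid_fiber:
  assumes v: "v1\<^sup>2 + v2\<^sup>2 = 1" and C: "zero_set f = range (line_point a b v1 v2)"
    and "t \<noteq> 0" "s = t + e" "e\<^sup>2 = d\<^sup>2"
  shows "line_point a b v1 v2 t \<in> conchoid_fiber f a b d (line_point a b v1 v2 s)"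
proof -
  have "eval2 f (line_point a b v1 v2 t) = 0" using C by (auto simp: zero_set_def)
  from conchoid_B_I[OF \<open>t \<noteq> 0\<close> v this \<open>e\<^sup>2 = d\<^sup>2\<close>] show ?thesis
    unfolding \<open>s = t + e\<close> by (rule mem_conchoid_fiberI)
qed

lemma conchoid_of_line_through_center:
  fixes f :: "'a::field_char_0 poly poly"
  assumes v: "v1\<^sup>2 + v2\<^sup>2 = 1" and C: "zero_set f = range (line_point a b v1 v2)" and "d \<noteq> 0"
  shows "conchoid f a b d = range (line_point a b v1 v2)"
proof -
  have "fst ` conchoid_B f a b d = range (line_point a b v1 v2)"
  proof (intro equalityI subsetI)
    fix x assume "x \<in> fst ` conchoid_B f a b d"
    then obtain y w where B: "(x, y, w) \<in> conchoid_B f a b d" by force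
    then have "y \<in> zero_set f" by (simp add: zero_set_def conchoid_B_D(1))
    then obtain t where y: "y = line_point a b v1 v2 t" using C by auto
    obtain k where "fst x - a = (1 + k) * (fst y - a)" "snd x - b = (1 + k) * (snd y - b)"
      using conchoid_B_D(3)[OF B] by blast
    then have "x = line_point a b v1 v2 ((1 + k) * t)"
      by (simp add: y line_point_def prod_eq_iff algebra_simps)
    then show "x \<in> range (line_point a b v1 v2)" by blast
  next
    fix x assume "x \<in> range (line_point a b v1 v2)"
    then obtain s where x: "x = line_point a b v1 v2 s" by blast
    \<comment> \<open>x comes from the curve point at parameter s - d, or at 2d when s = d\<close>
    have "conchoid_fiber f a b d x \<noteq> {}"
    proof (cases "s = d")
      case True
      then show ?thesis unfolding x
        using line_point_mem_conchoid_fiber[OF v C, where t = "2 * d" and e = "- d"] \<open>d \<noteq> 0\<close>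
        by auto
    next
      case False
      then show ?thesis unfolding x
        using line_point_mem_conchoid_fiber[OF v C, where t = "s - d" and e = d] by auto
    qed
    then show "x \<in> fst ` conchoid_B f a b d" by (force dest: mem_conchoid_fiberD)
  qed
  then show ?thesis
    using zariski_closed_zero_set[of f] by (simp add: conchoid_eq_zclosure C zclosure_closed)
qed

lemma line_conchoid_fiber_not_singleton:
  fixes f :: "'a::field_char_0 poly poly"
  assumes v: "v1\<^sup>2 + v2\<^sup>2 = 1" and C: "zero_set f = range (line_point a b v1 v2)"
    and "d \<noteq> 0" "s \<noteq> d" "s \<noteq> - d"
  shows "card (conchoid_fiber f a b d (line_point a b v1 v2 s)) \<noteq> 1"
proof
  assume "card (conchoid_fiber f a b d (line_point a b v1 v2 s)) = 1"
  then obtain z where fiber: "conchoid_fiber f a b d (line_point a b v1 v2 s) = {z}"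
    by (rule card_1_singletonE)
  have "s - d \<noteq> 0" "s + d \<noteq> 0" using assms(4,5) by (auto simp: add_eq_0_iff)
  then have "line_point a b v1 v2 (s - d) \<in> conchoid_fiber f a b d (line_point a b v1 v2 s)"
    "line_point a b v1 v2 (s + d) \<in> conchoid_fiber f a b d (line_point a b v1 v2 s)"
    by (auto intro: line_point_mem_conchoid_fiber[OF v C, where e = d]
        line_point_mem_conchoid_fiber[OF v C, where e = "- d"])
  then have "line_point a b v1 v2 (s - d) = line_point a b v1 v2 (s + d)"
    unfolding fiber by simp
  moreover have "inj (line_point a b v1 v2)" using v by (intro inj_line_point) auto
  ultimately have "s - d = s + d" by (rule injD[rotated])
  with \<open>d \<noteq> 0\<close> show False by simp
qed

lemma line_conchoid_not_simple:
  fixes f :: "'a::field_char_0 poly poly"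
  assumes v: "v1\<^sup>2 + v2\<^sup>2 = 1" and C: "zero_set f = range (line_point a b v1 v2)" and "d \<noteq> 0"
  shows "\<not> simple_component f a b d (range (line_point a b v1 v2))"
proof
  assume "simple_component f a b d (range (line_point a b v1 v2))"
  then obtain \<Omega> where \<Omega>: "\<Omega> \<subseteq> range (line_point a b v1 v2)" "zclosure \<Omega> = range (line_point a b v1 v2)"
      "\<forall>x\<in>\<Omega>. card (conchoid_fiber f a b d x) = 1"
    unfolding simple_component_def by blast
  have "\<Omega> \<subseteq> {line_point a b v1 v2 d, line_point a b v1 v2 (- d)}"
  proof
    fix x assume "x \<in> \<Omega>"
    moreover from this obtain s where "x = line_point a b v1 v2 s" using \<Omega>(1) by blast
    ultimately show "x \<in> {line_point a b v1 v2 d, line_point a b v1 v2 (- d)}"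
      using \<Omega>(3) line_conchoid_fiber_not_singleton[OF v C \<open>d \<noteq> 0\<close>, of s] by auto
  qed
  then have "range (line_point a b v1 v2) \<subseteq> {line_point a b v1 v2 d, line_point a b v1 v2 (- d)}"
    unfolding \<Omega>(2)[symmetric] by (rule zclosure_minimal[rotated]) (auto simp: line_point_def)
  then have "line_point a b v1 v2 0 \<in> {line_point a b v1 v2 d, line_point a b v1 v2 (- d)}" by blast
  moreover have "inj (line_point a b v1 v2)" using v by (intro inj_line_point) auto
  ultimately show False using \<open>d \<noteq> 0\<close> by (auto dest: injD)
qed

lemma line_conchoid_irreducible_special:
  fixes f :: "'a::field_char_0 poly poly"
  assumes v: "v1\<^sup>2 + v2\<^sup>2 = 1" and C: "zero_set f = range (line_point a b v1 v2)" and "d \<noteq> 0"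
  shows "zariski_irreducible (conchoid f a b d) \<and> special_component f a b d (conchoid f a b d)"
proof -
  have irr: "zariski_irreducible (range (line_point a b v1 v2))"
    using v by (intro zariski_irreducible_range_line_point) simp
  then have "irreducible_component (range (line_point a b v1 v2)) (range (line_point a b v1 v2))"
    by (auto simp: irreducible_component_def)
  with irr line_conchoid_not_simple[OF v C \<open>d \<noteq> 0\<close>] show ?thesis
    by (simp add: conchoid_of_line_through_center[OF v C \<open>d \<noteq> 0\<close>] special_component_def)
qed

lemma line_through_center_eq_range_line_point:
  fixes f :: "'a::field_char_0 poly poly"
  assumes alg: "algebraically_closed TYPE('a)"
    and C: "zero_set f = {(y1, y2). \<alpha> * y1 + \<beta> * y2 + \<gamma> = 0}" and \<alpha>\<beta>: "(\<alpha>, \<beta>) \<noteq> (0, 0)"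
    and "(a, b) \<in> zero_set f" and y0: "y0 \<in> zero_set f" "quadrance a b y0 \<noteq> 0"
  shows "\<exists>v1 v2. v1\<^sup>2 + v2\<^sup>2 = 1 \<and> zero_set f = range (line_point a b v1 v2)"
proof -
  obtain s where s: "s\<^sup>2 = quadrance a b y0" using square_root_exists[OF alg] by blast
  with y0(2) have "s \<noteq> 0" by auto
  obtain v1 v2 where v: "v1\<^sup>2 + v2\<^sup>2 = 1" and y0_eq: "y0 = line_point a b v1 v2 s"
    using unit_direction[OF s \<open>s \<noteq> 0\<close>] by blast
  have A: "\<alpha> * a + \<beta> * b + \<gamma> = 0" using \<open>(a, b) \<in> zero_set f\<close> C by auto
  have "\<alpha> * (a + s * v1) + \<beta> * (b + s * v2) + \<gamma> = 0"
    using y0(1) unfolding C y0_eq by (simp add: line_point_def)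
  moreover have "s * (\<alpha> * v1 + \<beta> * v2)
      = (\<alpha> * (a + s * v1) + \<beta> * (b + s * v2) + \<gamma>) - (\<alpha> * a + \<beta> * b + \<gamma>)"
    by (simp add: algebra_simps)
  ultimately have "s * (\<alpha> * v1 + \<beta> * v2) = 0" using A by simp
  with \<open>s \<noteq> 0\<close> have v_dir: "\<alpha> * v1 + \<beta> * v2 = 0" by simp
  have "zero_set f = range (line_point a b v1 v2)"
  proof (intro equalityI subsetI)
    fix y assume "y \<in> zero_set f"
    then have "\<alpha> * fst y + \<beta> * snd y + \<gamma> = 0" using C by (cases y) auto
    moreover have "\<alpha> * (fst y - a) + \<beta> * (snd y - b)
        = (\<alpha> * fst y + \<beta> * snd y + \<gamma>) - (\<alpha> * a + \<beta> * b + \<gamma>)"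
      by (simp add: algebra_simps)
    ultimately have u_dir: "\<alpha> * (fst y - a) + \<beta> * (snd y - b) = 0" using A by simp
    \<comment> \<open>(\<alpha>, \<beta>) is orthogonal to both y - A and v, hence these are parallel\<close>
    have "\<alpha> * (v2 * (fst y - a) - v1 * (snd y - b))
        = v2 * (\<alpha> * (fst y - a) + \<beta> * (snd y - b)) - (snd y - b) * (\<alpha> * v1 + \<beta> * v2)"
      and "\<beta> * (v2 * (fst y - a) - v1 * (snd y - b))
        = (fst y - a) * (\<alpha> * v1 + \<beta> * v2) - v1 * (\<alpha> * (fst y - a) + \<beta> * (snd y - b))"
      by (simp_all add: algebra_simps)
    with \<alpha>\<beta> u_dir v_dir have "v2 * (fst y - a) - v1 * (snd y - b) = 0" by auto
    with v obtain t where "y = line_point a b v1 v2 t" using line_point_if_parallel[of v1 v2 y a b] by auto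
    then show "y \<in> range (line_point a b v1 v2)" by blast
  next
    fix y assume "y \<in> range (line_point a b v1 v2)"
    then obtain t where y: "y = line_point a b v1 v2 t" by blast
    have "\<alpha> * (a + t * v1) + \<beta> * (b + t * v2) + \<gamma> = (\<alpha> * a + \<beta> * b + \<gamma>) + t * (\<alpha> * v1 + \<beta> * v2)"
      by (simp add: algebra_simps)
    with A v_dir show "y \<in> zero_set f" unfolding C y by (simp add: line_point_def)
  qed
  with v show ?thesis by blast
qed

theorem corollary2:
  fixes f :: "'a::field_char_0 poly poly"
    and a b d :: 'a
  assumes "algebraically_closed TYPE('a)"
    and "irreducible f"
    and "d \<noteq> 0"
    and "{p \<in> zero_set f. (fst p - a)^2 + (snd p - b)^2 \<noteq> 0} \<noteq> {}"
    and "\<not> is_circle_centered (zero_set f) (a, b)"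
  shows "(zariski_irreducible (conchoid f a b d) \<and> special_component f a b d (conchoid f a b d))
         \<longleftrightarrow> (is_line (zero_set f) \<and> (a, b) \<in> zero_set f)"
proof -
  from assms(4) obtain y0 where y0: "y0 \<in> zero_set f" "quadrance a b y0 \<noteq> 0"
    by (auto simp: quadrance_def)
  show ?thesis
  proof
    assume "zariski_irreducible (conchoid f a b d) \<and> special_component f a b d (conchoid f a b d)"
    then show "is_line (zero_set f) \<and> (a, b) \<in> zero_set f"
      using special_conchoid_is_line_through_center[OF assms(1-3) y0] by blast
  next
    assume line: "is_line (zero_set f) \<and> (a, b) \<in> zero_set f"
    then obtain \<alpha> \<beta> \<gamma> where "(\<alpha>, \<beta>) \<noteq> (0, 0)" "zero_set f = {(y1, y2). \<alpha> * y1 + \<beta> * y2 + \<gamma> = 0}"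
      unfolding is_line_def by blast
    then obtain v1 v2 where "v1\<^sup>2 + v2\<^sup>2 = 1" "zero_set f = range (line_point a b v1 v2)"
      using line_through_center_eq_range_line_point[OF assms(1) _ _ _ y0] line by blast
    then show "zariski_irreducible (conchoid f a b d) \<and> special_component f a b d (conchoid f a b d)"
      using line_conchoid_irreducible_special assms(3) by blast
  qed
qed

end
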